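(* For every $p>1$, $$\mathrm{ZZ}\ \ge\ C_p^{(1)}:=\frac12\int_0^\infty V\Big\{\int_{-\infty}^{\infty}{\rm E}\Big[\big(f_{\phi|\mathbf{x}}(\varphi|\mathbf{x})^{\frac{1}{1-p}}+f_{\phi|\mathbf{x}}(\varphi+h|\mathbf{x})^{\frac{1}{1-p}}\big)^{1-p}\Big]d\varphi\Big\}(h)\,h\,dh$$ and $$\mathrm{ZZ}\ \ge\ C_p^{(2)}:=\frac12\int_0^\infty V\Big\{\int_{-\infty}^{\infty}{\rm E}\Big[f_{\phi|\mathbf{x}}(\varphi|\mathbf{x})+f_{\phi|\mathbf{x}}(\varphi+h|\mathbf{x})-\big(f_{\phi|\mathbf{x}}(\varphi|\mathbf{x})^{\frac{p}{p-1}}+f_{\phi|\mathbf{x}}(\varphi+h|\mathbf{x})^{\frac{p}{p-1}}\big)^{\frac{p-1}{p}}\Big]d\varphi\Big\}(h)\,h\,dh,$$ where the expectations are over the marginal law of $\mathbf{x}$. Consequently, combined with the extended Ziv–Zakai bound ${\rm E}[|\hat\phi(\mathbf{x})-\phi|^2]\ge \mathrm{ZZ}$, every estimator $\hat\phi$ satisfies ${\rm E}[|\hat\phi(\mathbf{x})-\phi|^2]\ge\max(C_p^{(1)},C_p^{(2)})$ for all $p>1$.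
   Context: A continuous scalar random parameter $\phi$ has prior density $f_\phi$, and the observation $\mathbf{x}$ (continuous, with conditional density $f_{\mathbf{x}|\phi}(\mathbf{x}|\varphi)$) has posterior density $f_{\phi|\mathbf{x}}(\cdot|\mathbf{x})$; assume the posterior density is positive. For $\varphi\in\mathbb{R}$, $h>0$, $P_{\min}(\varphi,\varphi+h)$ is the minimum (MAP) probability of error of the binary test $H_0:\mathbf{x}\sim f_{\mathbf{x}|\phi}(\cdot|\varphi)$ versus $H_1:\mathbf{x}\sim f_{\mathbf{x}|\phi}(\cdot|\varphi+h)$ with priors $P(H_0)=\frac{f_\phi(\varphi)}{f_\phi(\varphi)+f_\phi(\varphi+h)}$, $P(H_1)=1-P(H_0)$. The valley-filling operator is $(Vg)(h)=\sup_{\xi\ge0}g(h+\xi)$. The (extended Ziv–Zakai) quantity is $\mathrm{ZZ}=\frac12\int_0^\infty V\big\{\int_{-\infty}^\infty (f_\phi(\varphi)+f_\phi(\varphi+h))P_{\min}(\varphi,\varphi+h)\,d\varphi\big\}(h)\,h\,dh$. *)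

theory Defs
  imports "HOL-Analysis.Analysis"
begin

text \<open>Setting: scalar parameter phi with prior density f (w.r.t. Lebesgue measure on the reals);
observation x in a Euclidean space with conditional density L phi x (w.r.t. Lebesgue measure).\<close>

definition marginal :: "(real \<Rightarrow> real) \<Rightarrow> (real \<Rightarrow> 'a::euclidean_space \<Rightarrow> real) \<Rightarrow> 'a \<Rightarrow> real" where
  "marginal f L x = enn2real (\<integral>\<^sup>+ \<phi>. ennreal (f \<phi> * L \<phi> x) \<partial>lborel)"

definition posterior :: "(real \<Rightarrow> real) \<Rightarrow> (real \<Rightarrow> 'a::euclidean_space \<Rightarrow> real) \<Rightarrow> real \<Rightarrow> 'a \<Rightarrow> real" where
  "posterior f L \<phi> x = f \<phi> * L \<phi> x / marginal f L x"

definition expect_x :: "(real \<Rightarrow> real) \<Rightarrow> (real \<Rightarrow> 'a::euclidean_space \<Rightarrow> real) \<Rightarrow> ('a \<Rightarrow> real) \<Rightarrow> ennreal" where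
  "expect_x f L g = (\<integral>\<^sup>+ x. ennreal (marginal f L x) * ennreal (g x) \<partial>lborel)"

text \<open>Minimum probability of error of the binary test H0: x ~ L phi versus H1: x ~ L (phi+h),
  with priors P(H0) = f phi / (f phi + f (phi+h)), P(H1) = 1 - P(H0); infimum over all
  (measurable) decision regions D on which H1 is decided.\<close>
definition Pmin :: "(real \<Rightarrow> real) \<Rightarrow> (real \<Rightarrow> 'a::euclidean_space \<Rightarrow> real) \<Rightarrow> real \<Rightarrow> real \<Rightarrow> ennreal" where
  "Pmin f L \<phi> h =
     (let p0 = f \<phi> / (f \<phi> + f (\<phi> + h)); p1 = 1 - p0 in
      (INF D \<in> sets (lborel :: 'a measure).
          ennreal p0 * (\<integral>\<^sup>+ x \<in> D. ennreal (L \<phi> x) \<partial>lborel)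
        + ennreal p1 * (\<integral>\<^sup>+ x \<in> (UNIV - D). ennreal (L (\<phi> + h) x) \<partial>lborel)))"

definition Vfill :: "(real \<Rightarrow> ennreal) \<Rightarrow> real \<Rightarrow> ennreal" where
  "Vfill g h = (SUP \<xi> \<in> {0..}. g (h + \<xi>))"

definition ZZ :: "(real \<Rightarrow> real) \<Rightarrow> (real \<Rightarrow> 'a::euclidean_space \<Rightarrow> real) \<Rightarrow> ennreal" where
  "ZZ f L = (1/2) * (\<integral>\<^sup>+ h \<in> {0..}.
      Vfill (\<lambda>h. \<integral>\<^sup>+ \<phi>. ennreal (f \<phi> + f (\<phi> + h)) * Pmin f L \<phi> h \<partial>lborel) h * ennreal h \<partial>lborel)"

definition C1 :: "(real \<Rightarrow> real) \<Rightarrow> (real \<Rightarrow> 'a::euclidean_space \<Rightarrow> real) \<Rightarrow> real \<Rightarrow> ennreal" where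
  "C1 f L p = (1/2) * (\<integral>\<^sup>+ h \<in> {0..}.
      Vfill (\<lambda>h. \<integral>\<^sup>+ \<phi>. expect_x f L (\<lambda>x.
          (posterior f L \<phi> x powr (1 / (1 - p)) + posterior f L (\<phi> + h) x powr (1 / (1 - p))) powr (1 - p))
        \<partial>lborel) h * ennreal h \<partial>lborel)"

definition C2 :: "(real \<Rightarrow> real) \<Rightarrow> (real \<Rightarrow> 'a::euclidean_space \<Rightarrow> real) \<Rightarrow> real \<Rightarrow> ennreal" where
  "C2 f L p = (1/2) * (\<integral>\<^sup>+ h \<in> {0..}.
      Vfill (\<lambda>h. \<integral>\<^sup>+ \<phi>. expect_x f L (\<lambda>x.
          posterior f L \<phi> x + posterior f L (\<phi> + h) x
          - (posterior f L \<phi> x powr (p / (p - 1)) + posterior f L (\<phi> + h) x powr (p / (p - 1))) powr ((p - 1) / p))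
        \<partial>lborel) h * ennreal h \<partial>lborel)"

definition mse :: "(real \<Rightarrow> real) \<Rightarrow> (real \<Rightarrow> 'a::euclidean_space \<Rightarrow> real) \<Rightarrow> ('a \<Rightarrow> real) \<Rightarrow> ennreal" where
  "mse f L est = (\<integral>\<^sup>+ \<phi>. \<integral>\<^sup>+ x. ennreal (f \<phi> * L \<phi> x) * ennreal ((est x - \<phi>)\<^sup>2) \<partial>lborel \<partial>lborel)"

end

theory Submission
  imports Defs
begin

(* All three quantities ZZ, C1 and C2 have the same shape
     (1/2) * \<integral>_{h \<ge> 0} V{ \<integral> F h \<phi> d\<phi> }(h) * h dh,
   which is monotone in the integrand F.  So it suffices to compare integrands
   pointwise in (h, \<phi>):
   (1) writing u, v for the two posterior values, both C-integrands are bounded by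
       min u v: the power mean with negative exponent 1/(1-p) lies below the
       minimum, and the power mean with exponent p/(p-1) > 0 lies above the
       maximum, so u + v minus it is at most u + v - max u v = min u v;
   (2) marginal * posterior is the joint density f * L, hence
       E[min(posteriors)] = \<integral> min (f \<phi> L \<phi> x) (f (\<phi>+h) L (\<phi>+h) x) dx, and this
       integral is below (f \<phi> + f (\<phi>+h)) * Pmin, because the pointwise minimum is
       below the Bayes risk of every decision region D. *)

lemma power_mean_neg_le_min:
  fixes u v q :: real
  assumes u: "u > 0" and v: "v > 0" and q: "q < 0"
  shows "(u powr q + v powr q) powr (1 / q) \<le> min u v"
proof -
  define m where "m = min u v"
  have m: "m > 0" using u v by (simp add: m_def)
  have "m powr q \<le> u powr q + v powr q"
    by (cases "u \<le> v") (auto simp: m_def min_def add_increasing add_increasing2)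
  then have "(u powr q + v powr q) powr (1 / q) \<le> (m powr q) powr (1 / q)"
    using m q by (intro powr_mono2') auto
  also have "\<dots> = m" using m q by (simp add: powr_powr)
  finally show ?thesis by (simp add: m_def)
qed

lemma max_le_power_sum_root:
  fixes u v r :: real
  assumes u: "u \<ge> 0" and v: "v \<ge> 0" and r: "r > 0"
  shows "max u v \<le> (u powr r + v powr r) powr (1 / r)"
proof -
  have bound: "w \<le> (u powr r + v powr r) powr (1 / r)"
    if w: "w \<ge> 0" "w powr r \<le> u powr r + v powr r" for w
  proof -
    have "w = (w powr r) powr (1 / r)" using w r
      by (cases "w = 0") (auto simp: powr_powr)
    also have "\<dots> \<le> (u powr r + v powr r) powr (1 / r)"
      using w r by (intro powr_mono2) auto
    finally show ?thesis .
  qed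
  show ?thesis using bound[of u] bound[of v] u v by simp
qed

lemma C1_integrand_le_min:
  fixes u v p :: real
  assumes "u > 0" and "v > 0" and "p > 1"
  shows "(u powr (1 / (1 - p)) + v powr (1 / (1 - p))) powr (1 - p) \<le> min u v"
  using power_mean_neg_le_min[of u v "1 / (1 - p)"] assms by simp

lemma C2_integrand_le_min:
  fixes u v p :: real
  assumes "u \<ge> 0" and "v \<ge> 0" and "p > 1"
  shows "u + v - (u powr (p / (p - 1)) + v powr (p / (p - 1))) powr ((p - 1) / p) \<le> min u v"
proof -
  have "(p - 1) / p = 1 / (p / (p - 1))" by simp
  then have "max u v \<le> (u powr (p / (p - 1)) + v powr (p / (p - 1))) powr ((p - 1) / p)"
    using max_le_power_sum_root[of u v "p / (p - 1)"] assms by simp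
  then show ?thesis by (simp add: min_def max_def split: if_splits)
qed

lemma nn_integral_min_le_test_risk:
  fixes g0 g1 :: "'a \<Rightarrow> real" and a b :: real
  assumes a: "a \<ge> 0" and b: "b \<ge> 0"
    and g0: "g0 \<in> borel_measurable M" and g1: "g1 \<in> borel_measurable M" and D: "D \<in> sets M"
  shows "(\<integral>\<^sup>+ x. ennreal (min (a * g0 x) (b * g1 x)) \<partial>M)
         \<le> ennreal a * (\<integral>\<^sup>+ x \<in> D. ennreal (g0 x) \<partial>M)
           + ennreal b * (\<integral>\<^sup>+ x \<in> (UNIV - D). ennreal (g1 x) \<partial>M)"
proof -
  have "(\<integral>\<^sup>+ x. ennreal (min (a * g0 x) (b * g1 x)) \<partial>M)
      \<le> (\<integral>\<^sup>+ x. ennreal a * (ennreal (g0 x) * indicator D x)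
              + ennreal b * (ennreal (g1 x) * indicator (UNIV - D) x) \<partial>M)"
    using a b by (intro nn_integral_mono)
      (auto simp: indicator_def ennreal_mult'[symmetric] intro!: ennreal_leI add_increasing2)
  also have "\<dots> = ennreal a * (\<integral>\<^sup>+ x \<in> D. ennreal (g0 x) \<partial>M)
      + ennreal b * (\<integral>\<^sup>+ x \<in> (UNIV - D). ennreal (g1 x) \<partial>M)"
    using D g0 g1 by (subst nn_integral_add) (auto simp: nn_integral_cmult)
  finally show ?thesis .
qed

lemma nn_integral_min_le_Pmin:
  fixes f :: "real \<Rightarrow> real" and L :: "real \<Rightarrow> 'a::euclidean_space \<Rightarrow> real"
  assumes Lm: "\<And>\<phi>. L \<phi> \<in> borel_measurable lborel"
    and p0: "0 \<le> p0" "p0 \<le> 1" and p0_eq: "p0 = f \<phi> / (f \<phi> + f (\<phi> + h))"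
  shows "(\<integral>\<^sup>+ x. ennreal (min (p0 * L \<phi> x) ((1 - p0) * L (\<phi> + h) x)) \<partial>lborel) \<le> Pmin f L \<phi> h"
  unfolding Pmin_def Let_def p0_eq[symmetric]
  using p0 by (intro INF_greatest nn_integral_min_le_test_risk Lm) auto

lemma nn_integral_min_joint_le_Pmin:
  fixes f :: "real \<Rightarrow> real" and L :: "real \<Rightarrow> 'a::euclidean_space \<Rightarrow> real"
  assumes Lm: "\<And>\<phi>. L \<phi> \<in> borel_measurable lborel"
    and a: "f \<phi> \<ge> 0" and b: "f (\<phi> + h) \<ge> 0"
  shows "(\<integral>\<^sup>+ x. ennreal (min (f \<phi> * L \<phi> x) (f (\<phi> + h) * L (\<phi> + h) x)) \<partial>lborel)
         \<le> ennreal (f \<phi> + f (\<phi> + h)) * Pmin f L \<phi> h"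
proof (cases "f \<phi> + f (\<phi> + h) = 0")
  case True
  then have "f \<phi> = 0" "f (\<phi> + h) = 0" using a b by auto
  then show ?thesis by simp
next
  case False
  define c where "c = f \<phi> + f (\<phi> + h)"
  define p0 where "p0 = f \<phi> / c"
  have c: "c > 0" using False a b by (simp add: c_def)
  have p0: "0 \<le> p0" "p0 \<le> 1" using a b c by (auto simp: p0_def c_def)
  have weights: "c * p0 = f \<phi>" "c * (1 - p0) = f (\<phi> + h)"
    using c by (auto simp: p0_def c_def field_simps)
  have "(\<integral>\<^sup>+ x. ennreal (min (f \<phi> * L \<phi> x) (f (\<phi> + h) * L (\<phi> + h) x)) \<partial>lborel)
      = (\<integral>\<^sup>+ x. ennreal c * ennreal (min (p0 * L \<phi> x) ((1 - p0) * L (\<phi> + h) x)) \<partial>lborel)"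
    using c by (simp flip: ennreal_mult' weights add: min_mult_distrib_left mult.assoc)
  also have "\<dots> = ennreal c * (\<integral>\<^sup>+ x. ennreal (min (p0 * L \<phi> x) ((1 - p0) * L (\<phi> + h) x)) \<partial>lborel)"
    using Lm by (simp add: nn_integral_cmult)
  also have "\<dots> \<le> ennreal c * Pmin f L \<phi> h"
    using nn_integral_min_le_Pmin[OF Lm p0 p0_def[unfolded c_def]] by (rule mult_left_mono) simp
  finally show ?thesis by (simp add: c_def)
qed

lemma marginal_nonneg: "marginal f L x \<ge> 0"
  by (simp add: marginal_def)

lemma marginal_mult_posterior:
  assumes "marginal f L x > 0"
  shows "marginal f L x * posterior f L \<phi> x = f \<phi> * L \<phi> x"
  using assms by (simp add: posterior_def)

lemma expect_x_le_Pmin: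
  fixes f :: "real \<Rightarrow> real" and L :: "real \<Rightarrow> 'a::euclidean_space \<Rightarrow> real"
  assumes Lm: "\<And>\<phi>. L \<phi> \<in> borel_measurable lborel"
    and f_nonneg: "\<And>\<phi>. f \<phi> \<ge> 0"
    and G: "\<And>x. marginal f L x > 0 \<Longrightarrow> G x \<le> min (posterior f L \<phi> x) (posterior f L (\<phi> + h) x)"
  shows "expect_x f L G \<le> ennreal (f \<phi> + f (\<phi> + h)) * Pmin f L \<phi> h"
proof -
  have "ennreal (marginal f L x) * ennreal (G x)
        \<le> ennreal (min (f \<phi> * L \<phi> x) (f (\<phi> + h) * L (\<phi> + h) x))" for x
  proof (cases "marginal f L x > 0")
    case False
    then show ?thesis using marginal_nonneg[of f L x] by simp
  next
    case True
    have "marginal f L x * G x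
          \<le> marginal f L x * min (posterior f L \<phi> x) (posterior f L (\<phi> + h) x)"
      using G[OF True] True by (intro mult_left_mono) auto
    also have "\<dots> = min (f \<phi> * L \<phi> x) (f (\<phi> + h) * L (\<phi> + h) x)"
      using True by (simp add: min_mult_distrib_left marginal_mult_posterior)
    finally show ?thesis using True by (simp flip: ennreal_mult' add: ennreal_leI)
  qed
  then have "expect_x f L G
      \<le> (\<integral>\<^sup>+ x. ennreal (min (f \<phi> * L \<phi> x) (f (\<phi> + h) * L (\<phi> + h) x)) \<partial>lborel)"
    unfolding expect_x_def by (rule nn_integral_mono)
  also have "\<dots> \<le> ennreal (f \<phi> + f (\<phi> + h)) * Pmin f L \<phi> h"
    using Lm f_nonneg by (intro nn_integral_min_joint_le_Pmin)
  finally show ?thesis .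
qed

definition zz_functional :: "(real \<Rightarrow> real \<Rightarrow> ennreal) \<Rightarrow> ennreal" where
  "zz_functional F = (1/2) * (\<integral>\<^sup>+ h \<in> {0..}. Vfill (\<lambda>h. \<integral>\<^sup>+ \<phi>. F h \<phi> \<partial>lborel) h * ennreal h \<partial>lborel)"

lemma Vfill_mono: "(\<And>h. g h \<le> g' h) \<Longrightarrow> Vfill g h \<le> Vfill g' h"
  unfolding Vfill_def by (intro SUP_mono') auto

lemma zz_functional_mono:
  assumes "\<And>h \<phi>. F h \<phi> \<le> G h \<phi>"
  shows "zz_functional F \<le> zz_functional G"
  unfolding zz_functional_def
  using assms by (intro mult_left_mono nn_integral_mono mult_right_mono Vfill_mono) auto

theorem mainTheorem10:
  fixes f :: "real \<Rightarrow> real" and L :: "real \<Rightarrow> 'a::euclidean_space \<Rightarrow> real" and p :: real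
  assumes f_meas: "f \<in> borel_measurable lborel"
    and f_nonneg: "\<And>\<phi>. f \<phi> \<ge> 0"
    and f_dens: "(\<integral>\<^sup>+ \<phi>. ennreal (f \<phi>) \<partial>lborel) = 1"
    and L_meas: "(\<lambda>(\<phi>, x). L \<phi> x) \<in> borel_measurable (lborel \<Otimes>\<^sub>M lborel)"
    and L_nonneg: "\<And>\<phi> x. L \<phi> x \<ge> 0"
    and L_dens: "\<And>\<phi>. (\<integral>\<^sup>+ x. ennreal (L \<phi> x) \<partial>lborel) = 1"
    and post_pos: "\<And>\<phi> x. marginal f L x > 0 \<Longrightarrow> posterior f L \<phi> x > 0"
    and p: "p > 1"
  shows "ZZ f L \<ge> C1 f L p \<and> ZZ f L \<ge> C2 f L p \<and>
         (\<forall>est :: 'a \<Rightarrow> real. est \<in> borel_measurable lborel \<longrightarrow> mse f L est \<ge> ZZ f L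
            \<longrightarrow> mse f L est \<ge> max (C1 f L p) (C2 f L p))"
proof -
  have Lm: "L \<phi> \<in> borel_measurable lborel" for \<phi>
    using measurable_Pair2[OF L_meas, of \<phi>] by simp
  have post_nonneg: "posterior f L \<phi> x \<ge> 0" for \<phi> x
    using f_nonneg L_nonneg marginal_nonneg[of f L x] by (simp add: posterior_def)
  have C1_le_ZZ: "C1 f L p \<le> ZZ f L"
    unfolding C1_def ZZ_def zz_functional_def[symmetric]
    by (intro zz_functional_mono expect_x_le_Pmin[OF Lm f_nonneg]
              C1_integrand_le_min post_pos p)
  have C2_le_ZZ: "C2 f L p \<le> ZZ f L"
    unfolding C2_def ZZ_def zz_functional_def[symmetric]
    by (intro zz_functional_mono expect_x_le_Pmin[OF Lm f_nonneg]
              C2_integrand_le_min post_nonneg p)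
  show ?thesis using C1_le_ZZ C2_le_ZZ by (auto intro: order_trans)
qed

end
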